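(* Let $N(n)$ be the number of inflection points of the Hilbert curve $H_n$. Then $N(1)=4$, $N(2k)=4N(2k-1)-2$ and $N(2k+1)=4N(2k)-4$ for all $k\ge1$, and hence $$N(n)=\begin{cases}\dfrac{4^{n+1}+4}{5}, & n \text{ odd},\\[2mm] \dfrac{4^{n+1}+6}{5}, & n\text{ even}.\end{cases}$$
   Context: The Hilbert curve at step $n$ is the polygon $H_n$ in the unit square defined recursively: $H_1$ has vertices $(\tfrac14,\tfrac14),(\tfrac14,\tfrac34),(\tfrac34,\tfrac34),(\tfrac34,\tfrac14)$; $H_{n+1}$ is the concatenation (in this order, joined by the connecting edges) of $f_1(H_n),f_2(H_n),f_3(H_n),f_4(H_n)$, where $f_1(x,y)=(\tfrac y2,\tfrac x2)$, $f_2(x,y)=(\tfrac x2,\tfrac y2+\tfrac12)$, $f_3(x,y)=(\tfrac x2+\tfrac12,\tfrac y2+\tfrac12)$, $f_4(x,y)=(1-\tfrac y2,\tfrac12-\tfrac x2)$, each copy traversed in the order inherited from $H_n$. The inflection points of $H_n$ are the vertices of $H_n$, in order, after deleting every interior vertex whose two neighbouring vertices are collinear with it (endpoints are kept). *)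

theory Defs
  imports "HOL-Analysis.Analysis"
begin

definition hf1 :: "real \<times> real \<Rightarrow> real \<times> real" where
  "hf1 p = (snd p / 2, fst p / 2)"
definition hf2 :: "real \<times> real \<Rightarrow> real \<times> real" where
  "hf2 p = (fst p / 2, snd p / 2 + 1/2)"
definition hf3 :: "real \<times> real \<Rightarrow> real \<times> real" where
  "hf3 p = (fst p / 2 + 1/2, snd p / 2 + 1/2)"
definition hf4 :: "real \<times> real \<Rightarrow> real \<times> real" where
  "hf4 p = (1 - snd p / 2, 1/2 - fst p / 2)"

text \<open>Vertex list of the Hilbert polygon H_n (meaningful for n \<ge> 1; H_0 is a dummy).\<close>
fun hilbert :: "nat \<Rightarrow> (real \<times> real) list" where
  "hilbert 0 = []"
| "hilbert (Suc 0) = [(1/4, 1/4), (1/4, 3/4), (3/4, 3/4), (3/4, 1/4)]"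
| "hilbert (Suc (Suc n)) =
     map hf1 (hilbert (Suc n)) @ map hf2 (hilbert (Suc n)) @
     map hf3 (hilbert (Suc n)) @ map hf4 (hilbert (Suc n))"

definition inflection_points :: "(real \<times> real) list \<Rightarrow> (real \<times> real) list" where
  "inflection_points xs =
     [xs ! i. i \<leftarrow> [0..<length xs],
        i = 0 \<or> i = length xs - 1 \<or> \<not> collinear {xs ! (i - 1), xs ! i, xs ! (i + 1)}]"

definition num_inflection :: "nat \<Rightarrow> nat" where
  "num_inflection n = length (inflection_points (hilbert n))"

end

theory Submission
  imports Defs
begin

text \<open>Collinearity of three consecutive vertices is the vanishing of the orientation
  determinant, so the number of inflection points is two plus the number of turns of the
  polygon. Each of the four maps multiplies the determinant by \<open>\<plusminus>1/4\<close>, so the copies in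
  \<open>H\<^sub>n\<^sub>+\<^sub>1\<close> have as many turns as \<open>H\<^sub>n\<close>, and only the three junctions between them contribute
  new turns. These depend only on the two first and two last vertices of \<open>H\<^sub>n\<close>, which are
  explicit; the junctions add 4 turns when \<open>n\<close> is odd and 2 when \<open>n\<close> is even.\<close>

definition orient :: "real \<times> real \<Rightarrow> real \<times> real \<Rightarrow> real \<times> real \<Rightarrow> real" where
  "orient a b c = (fst b - fst a) * (snd c - snd b) - (snd b - snd a) * (fst c - fst b)"

lemma collinear_0_iff:
  "collinear {0, u, v :: real \<times> real} \<longleftrightarrow> fst u * snd v = snd u * fst v"
proof -
  have "(u = 0 \<or> v = 0 \<or> (\<exists>c. v = c *\<^sub>R u)) \<longleftrightarrow> fst u * snd v = snd u * fst v"
  proof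
    assume "u = 0 \<or> v = 0 \<or> (\<exists>c. v = c *\<^sub>R u)"
    then show "fst u * snd v = snd u * fst v"
      by (auto simp: algebra_simps)
  next
    assume h: "fst u * snd v = snd u * fst v"
    show "u = 0 \<or> v = 0 \<or> (\<exists>c. v = c *\<^sub>R u)"
    proof (cases "fst u = 0")
      case True
      show ?thesis
      proof (cases "snd u = 0")
        case True
        with \<open>fst u = 0\<close> show ?thesis by (simp add: prod_eq_iff)
      next
        case False
        with h \<open>fst u = 0\<close> have "v = (snd v / snd u) *\<^sub>R u"
          by (simp add: prod_eq_iff)
        then show ?thesis by blast
      qed
    next
      case False
      with h have "v = (fst v / fst u) *\<^sub>R u"
        by (simp add: prod_eq_iff field_simps)
      then show ?thesis by blast
    qed
  qed
  then show ?thesis by (simp add: collinear_lemma)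
qed

lemma collinear_iff_orient_eq_0: "collinear {a, b, c} \<longleftrightarrow> orient a b c = 0"
proof -
  have "collinear {a, b, c} \<longleftrightarrow> collinear {0, a - b, c - b}"
    by (simp add: collinear_3)
  also have "\<dots> \<longleftrightarrow> orient a b c = 0"
    by (simp add: collinear_0_iff orient_def algebra_simps; linarith)
  finally show ?thesis .
qed

fun turns :: "(real \<times> real) list \<Rightarrow> nat" where
  "turns (a # b # c # r) = (if orient a b c = 0 then 0 else 1) + turns (b # c # r)"
| "turns _ = 0"

lemma length_filter_upt_Suc:
  "length (filter P [0..<Suc m]) = (if P 0 then 1 else 0) + length (filter (P \<circ> Suc) [0..<m])"
  by (simp add: upt_conv_Cons map_Suc_upt[symmetric] filter_map del: upt_Suc)

lemma turns_eq_length_filter: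
  "turns xs = length (filter (\<lambda>i. orient (xs ! i) (xs ! Suc i) (xs ! Suc (Suc i)) \<noteq> 0)
                              [0..<length xs - 2])"
proof (induction xs rule: turns.induct)
  case (1 a b c r)
  then show ?case
    by (simp add: length_filter_upt_Suc[of _ "length r"] o_def del: upt_Suc)
qed auto

lemma length_inflection_points:
  assumes "length xs \<ge> 2"
  shows "length (inflection_points xs) = turns xs + 2"
proof -
  obtain m where m: "length xs = Suc (Suc m)"
    using assms by (metis add_2_eq_Suc le_Suc_ex)
  define P where
    "P i \<longleftrightarrow> i = 0 \<or> i = length xs - 1 \<or> \<not> collinear {xs ! (i - 1), xs ! i, xs ! (i + 1)}" for i
  have "[f i. i \<leftarrow> l, P i] = map f (filter P l)" for f :: "nat \<Rightarrow> real \<times> real" and l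
    by (induction l) auto
  then have "inflection_points xs = map ((!) xs) (filter P [0..<length xs])"
    unfolding inflection_points_def P_def .
  then have "length (inflection_points xs) = length (filter P [0..<Suc (Suc m)])"
    by (simp add: m)
  also have "\<dots> = 1 + length (filter (P \<circ> Suc) [0..<m]) + 1"
    by (subst length_filter_upt_Suc) (simp add: P_def m)
  also have "filter (P \<circ> Suc) [0..<m] =
      filter (\<lambda>i. orient (xs ! i) (xs ! Suc i) (xs ! Suc (Suc i)) \<noteq> 0) [0..<m]"
    by (rule filter_cong) (auto simp: P_def m collinear_iff_orient_eq_0)
  finally show ?thesis by (simp add: turns_eq_length_filter m)
qed

definition junction_turns :: "(real \<times> real) list \<Rightarrow> (real \<times> real) list \<Rightarrow> nat" where
  "junction_turns xs ys =
     (if orient (last (butlast xs)) (last xs) (hd ys) = 0 then 0 else 1) +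
     (if orient (last xs) (hd ys) (hd (tl ys)) = 0 then 0 else 1)"

lemma turns_append:
  assumes "length xs \<ge> 2" "length ys \<ge> 2"
  shows "turns (xs @ ys) = turns xs + turns ys + junction_turns xs ys"
  using assms(1)
proof (induction xs rule: turns.induct)
  case (1 a b c r)
  then show ?case by (simp add: junction_turns_def)
next
  case ("2_3" a b)
  from assms(2) obtain c d r where "ys = c # d # r"
    by (metis Suc_le_length_iff numeral_2_eq_2)
  then show ?case by (simp add: junction_turns_def)
qed auto

lemma junction_turns_append_right:
  assumes "length ys \<ge> 2"
  shows "junction_turns xs (ys @ zs) = junction_turns xs ys"
proof -
  from assms obtain c d r where "ys = c # d # r"
    by (metis Suc_le_length_iff numeral_2_eq_2)
  then show ?thesis by (simp add: junction_turns_def)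
qed

lemma turns_map:
  assumes "\<And>a b c. orient (f a) (f b) (f c) = k * orient a b c" "k \<noteq> 0"
  shows "turns (map f xs) = turns xs"
  by (induction xs rule: turns.induct) (simp_all add: assms)

lemma orient_hf1: "orient (hf1 a) (hf1 b) (hf1 c) = (-1/4) * orient a b c"
  and orient_hf2: "orient (hf2 a) (hf2 b) (hf2 c) = (1/4) * orient a b c"
  and orient_hf3: "orient (hf3 a) (hf3 b) (hf3 c) = (1/4) * orient a b c"
  and orient_hf4: "orient (hf4 a) (hf4 b) (hf4 c) = (-1/4) * orient a b c"
  by (simp_all add: orient_def hf1_def hf2_def hf3_def hf4_def algebra_simps)

lemma turns_map_hf:
  "turns (map hf1 xs) = turns xs" "turns (map hf2 xs) = turns xs"
  "turns (map hf3 xs) = turns xs" "turns (map hf4 xs) = turns xs"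
  using turns_map[OF orient_hf1] turns_map[OF orient_hf2] turns_map[OF orient_hf3]
    turns_map[OF orient_hf4] by simp_all

lemma length_hilbert: "length (hilbert (Suc n)) = 4 ^ Suc n"
  by (induction n) simp_all

lemma length_hilbert_ge_2: "length (hilbert (Suc n)) \<ge> 2"
  using self_le_power[of 4 "Suc n"] by (simp add: length_hilbert)

definition margin :: "nat \<Rightarrow> real" where
  "margin n = 1 / 2 ^ (n + 2)"

lemma hilbert_ends:
  "hd (hilbert (Suc n)) = (margin n, margin n)
    \<and> hd (tl (hilbert (Suc n))) =
        (if odd n then (3 * margin n, margin n) else (margin n, 3 * margin n))
    \<and> last (hilbert (Suc n)) = (1 - margin n, margin n)
    \<and> last (butlast (hilbert (Suc n))) =
        (if odd n then (1 - 3 * margin n, margin n) else (1 - margin n, 3 * margin n))"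
proof (induction n)
  case 0
  then show ?case by (simp add: margin_def)
next
  case (Suc n)
  let ?H = "hilbert (Suc n)"
  have "?H \<noteq> []" "tl ?H \<noteq> []" "butlast ?H \<noteq> []"
    using length_hilbert_ge_2[of n] by (simp_all flip: length_greater_0_conv)
  moreover have "hilbert (Suc (Suc n)) = map hf1 ?H @ map hf2 ?H @ map hf3 ?H @ map hf4 ?H"
    by simp
  ultimately have ends: "hd (hilbert (Suc (Suc n))) = hf1 (hd ?H)"
    "hd (tl (hilbert (Suc (Suc n)))) = hf1 (hd (tl ?H))"
    "last (hilbert (Suc (Suc n))) = hf4 (last ?H)"
    "last (butlast (hilbert (Suc (Suc n)))) = hf4 (last (butlast ?H))"
    by (simp_all add: hd_map last_map butlast_append map_tl[symmetric] map_butlast[symmetric])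
  have "margin (Suc n) = margin n / 2"
    by (simp add: margin_def)
  then show ?case
    unfolding ends using Suc.IH by (cases "odd n") (simp_all add: hf1_def hf4_def field_simps)
qed

lemma junction_turns_hilbert:
  fixes n :: nat
  defines "H \<equiv> hilbert (Suc n)"
  shows "junction_turns (map hf1 H) (map hf2 H) + junction_turns (map hf2 H) (map hf3 H)
           + junction_turns (map hf3 H) (map hf4 H) = (if odd n then 2 else 4)"
proof -
  have "H \<noteq> []" "tl H \<noteq> []" "butlast H \<noteq> []"
    using length_hilbert_ge_2[of n] by (simp_all add: H_def flip: length_greater_0_conv)
  then have "junction_turns (map f H) (map g H) =
      (if orient (f (last (butlast H))) (f (last H)) (g (hd H)) = 0 then 0 else 1) +
      (if orient (f (last H)) (g (hd H)) (g (hd (tl H))) = 0 then 0 else 1)" for f g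
    by (simp add: junction_turns_def hd_map last_map map_tl[symmetric] map_butlast[symmetric])
  moreover have "margin n > 0"
    by (simp add: margin_def)
  ultimately show ?thesis
    using hilbert_ends[of n] unfolding H_def
    by (cases "odd n") (simp_all add: orient_def hf1_def hf2_def hf3_def hf4_def field_simps)
qed

lemma turns_hilbert_Suc:
  "turns (hilbert (Suc (Suc n))) = 4 * turns (hilbert (Suc n)) + (if odd n then 2 else 4)"
proof -
  let ?H = "hilbert (Suc n)"
  have len: "length (map f ?H) \<ge> 2" "length (map f ?H @ ys) \<ge> 2"
    for f and ys :: "(real \<times> real) list"
    using length_hilbert_ge_2[of n] by simp_all
  have "turns (hilbert (Suc (Suc n))) = turns (map hf1 ?H @ map hf2 ?H @ map hf3 ?H @ map hf4 ?H)"
    by simp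
  also have "\<dots> = turns (map hf1 ?H) + turns (map hf2 ?H) + turns (map hf3 ?H) + turns (map hf4 ?H)
      + (junction_turns (map hf1 ?H) (map hf2 ?H) + junction_turns (map hf2 ?H) (map hf3 ?H)
         + junction_turns (map hf3 ?H) (map hf4 ?H))"
    by (simp only: turns_append[OF len(1) len(1)] turns_append[OF len(1) len(2)]
        junction_turns_append_right[OF len(1)])
  also have "\<dots> = 4 * turns ?H + (if odd n then 2 else 4)"
    by (simp add: junction_turns_hilbert turns_map_hf)
  finally show ?thesis .
qed

lemma num_inflection_Suc: "num_inflection (Suc n) = turns (hilbert (Suc n)) + 2"
  unfolding num_inflection_def by (rule length_inflection_points[OF length_hilbert_ge_2])

lemma num_inflection_Suc_Suc:
  "num_inflection (Suc (Suc n)) + (if odd n then 4 else 2) = 4 * num_inflection (Suc n)"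
  unfolding num_inflection_Suc turns_hilbert_Suc by simp

lemma num_inflection_closed_form:
  "5 * num_inflection (Suc n) = 4 ^ (n + 2) + (if odd n then 6 else 4)"
proof (induction n)
  case 0
  then show ?case
    by (simp add: num_inflection_Suc orient_def)
next
  case (Suc n)
  then show ?case
    using num_inflection_Suc_Suc[of n] by (cases "odd n") simp_all
qed

theorem mainTheorem9:
  shows "num_inflection 1 = 4
    \<and> (\<forall>k::nat. k \<ge> 1 \<longrightarrow>
         int (num_inflection (2*k)) = 4 * int (num_inflection (2*k - 1)) - 2
       \<and> int (num_inflection (2*k + 1)) = 4 * int (num_inflection (2*k)) - 4)
    \<and> (\<forall>n::nat. n \<ge> 1 \<longrightarrow>
         (odd n \<longrightarrow> real (num_inflection n) = (4 ^ (n + 1) + 4) / 5)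
       \<and> (even n \<longrightarrow> real (num_inflection n) = (4 ^ (n + 1) + 6) / 5))"
proof (intro conjI allI impI)
  show "num_inflection 1 = 4"
    using num_inflection_closed_form[of 0] by simp
next
  fix k :: nat
  assume "k \<ge> 1"
  then obtain j where "k = Suc j"
    by (cases k) auto
  then have "2 * k - 1 = Suc (2 * j)" "2 * k = Suc (Suc (2 * j))"
    "2 * k + 1 = Suc (Suc (Suc (2 * j)))"
    by simp_all
  then show "int (num_inflection (2 * k)) = 4 * int (num_inflection (2 * k - 1)) - 2"
    and "int (num_inflection (2 * k + 1)) = 4 * int (num_inflection (2 * k)) - 4"
    using num_inflection_Suc_Suc[of "2 * j"] num_inflection_Suc_Suc[of "Suc (2 * j)"] by simp_all
next
  fix n :: nat
  assume "n \<ge> 1"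
  then obtain m where "n = Suc m"
    by (cases n) auto
  then have "real (5 * num_inflection n) = 4 ^ (n + 1) + (if odd n then 4 else 6)"
    using num_inflection_closed_form[of m] by simp
  then show "odd n \<Longrightarrow> real (num_inflection n) = (4 ^ (n + 1) + 4) / 5"
    and "even n \<Longrightarrow> real (num_inflection n) = (4 ^ (n + 1) + 6) / 5"
    by simp_all
qed

end
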